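(* Let $\mathcal{S}$ (universe $S$) be the direct limit of a family of substructures $\{\mathcal{S}_i\}_{i\in I}$ (universes $S_i$). Suppose that for every finite set $\{a_0,\ldots,a_n\}\subseteq S$ there is $i\in I$ with $a_0,\ldots,a_n\in S_i$ such that for every $j\ge i$ there exists an isomorphism $f:\mathcal{S}\to\mathcal{S}_j$ with $f(a_l)=a_l$ for $l=0,\ldots,n$. Then $\lim_I\mathrm{Th}(\mathcal{S}_i^* )=\mathrm{Th}(\mathcal{S}^* )$.
   Context: A $\sigma$-structure $\mathcal{S}$ with universe $S$ is the direct limit of a family $\{\mathcal{S}_i\}_{i\in I}$ of substructures if $S=\bigcup_{i\in I}S_i$ and $I$ is partially ordered by $i\le j\iff S_i\subseteq S_j$, this order being directed. $\mathrm{Th}(\mathcal{T}^* )$ is the set of sentences over $\sigma$ expanded by a constant for each element of the universe of $\mathcal{T}$ that are true in $\mathcal{T}$; for substructures of $\mathcal{S}$ these are regarded as subsets of the set of sentences over $\sigma$ expanded by constants for all elements of $S$. For a family $\{\Delta_i\}_{i\in I}$: $\limsup_I \Delta_i=\{\theta: \forall i\ \exists j\ge i\ [\theta\in\Delta_j]\}$, $\liminf_I \Delta_i=\{\theta: \exists i\ \forall j\ge i\ [\theta\in\Delta_j]\}$, and $\lim_I\Delta_i=\Delta$ means both equal $\Delta$. *)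

theory Defs
  imports Main
begin

text \<open>Terms and formulas may additionally contain a constant Cst a for an element a;
this realises the expansion of the signature by a constant for each element.\<close>

datatype ('f, 'a) trm = Var nat | Cst 'a | Fn 'f "('f, 'a) trm list"

datatype ('f, 'r, 'a) fm =
    Eq "('f, 'a) trm" "('f, 'a) trm"
  | Rl 'r "('f, 'a) trm list"
  | Neg "('f, 'r, 'a) fm"
  | Conj "('f, 'r, 'a) fm" "('f, 'r, 'a) fm"
  | Ex nat "('f, 'r, 'a) fm"

fun wf_trm :: "('f \<Rightarrow> nat) \<Rightarrow> ('f, 'a) trm \<Rightarrow> bool" where
  "wf_trm ar (Var n) = True"
| "wf_trm ar (Cst a) = True"
| "wf_trm ar (Fn f ts) = (length ts = ar f \<and> (\<forall>t\<in>set ts. wf_trm ar t))"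

fun wf_fm :: "('f \<Rightarrow> nat) \<Rightarrow> ('r \<Rightarrow> nat) \<Rightarrow> ('f, 'r, 'a) fm \<Rightarrow> bool" where
  "wf_fm ar rar (Eq s t) = (wf_trm ar s \<and> wf_trm ar t)"
| "wf_fm ar rar (Rl r ts) = (length ts = rar r \<and> (\<forall>t\<in>set ts. wf_trm ar t))"
| "wf_fm ar rar (Neg \<phi>) = wf_fm ar rar \<phi>"
| "wf_fm ar rar (Conj \<phi> \<psi>) = (wf_fm ar rar \<phi> \<and> wf_fm ar rar \<psi>)"
| "wf_fm ar rar (Ex x \<phi>) = wf_fm ar rar \<phi>"

fun fv_trm :: "('f, 'a) trm \<Rightarrow> nat set" where
  "fv_trm (Var n) = {n}"
| "fv_trm (Cst a) = {}"
| "fv_trm (Fn f ts) = (\<Union>t\<in>set ts. fv_trm t)"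

fun fv_fm :: "('f, 'r, 'a) fm \<Rightarrow> nat set" where
  "fv_fm (Eq s t) = fv_trm s \<union> fv_trm t"
| "fv_fm (Rl r ts) = (\<Union>t\<in>set ts. fv_trm t)"
| "fv_fm (Neg \<phi>) = fv_fm \<phi>"
| "fv_fm (Conj \<phi> \<psi>) = fv_fm \<phi> \<union> fv_fm \<psi>"
| "fv_fm (Ex x \<phi>) = fv_fm \<phi> - {x}"

fun csts_trm :: "('f, 'a) trm \<Rightarrow> 'a set" where
  "csts_trm (Var n) = {}"
| "csts_trm (Cst a) = {a}"
| "csts_trm (Fn f ts) = (\<Union>t\<in>set ts. csts_trm t)"

fun csts_fm :: "('f, 'r, 'a) fm \<Rightarrow> 'a set" where
  "csts_fm (Eq s t) = csts_trm s \<union> csts_trm t"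
| "csts_fm (Rl r ts) = (\<Union>t\<in>set ts. csts_trm t)"
| "csts_fm (Neg \<phi>) = csts_fm \<phi>"
| "csts_fm (Conj \<phi> \<psi>) = csts_fm \<phi> \<union> csts_fm \<psi>"
| "csts_fm (Ex x \<phi>) = csts_fm \<phi>"

record ('a, 'f, 'r) struc =
  univ :: "'a set"
  fnI :: "'f \<Rightarrow> 'a list \<Rightarrow> 'a"
  relI :: "'r \<Rightarrow> 'a list \<Rightarrow> bool"

definition is_struc :: "('f \<Rightarrow> nat) \<Rightarrow> ('a, 'f, 'r) struc \<Rightarrow> bool" where
  "is_struc ar M \<longleftrightarrow> univ M \<noteq> {} \<and>
     (\<forall>f xs. length xs = ar f \<and> set xs \<subseteq> univ M \<longrightarrow> fnI M f xs \<in> univ M)"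

definition substruc :: "('f \<Rightarrow> nat) \<Rightarrow> ('r \<Rightarrow> nat) \<Rightarrow> ('a, 'f, 'r) struc \<Rightarrow> ('a, 'f, 'r) struc \<Rightarrow> bool" where
  "substruc ar rar N M \<longleftrightarrow> is_struc ar M \<and> is_struc ar N \<and> univ N \<subseteq> univ M \<and>
     (\<forall>f xs. length xs = ar f \<and> set xs \<subseteq> univ N \<longrightarrow> fnI N f xs = fnI M f xs) \<and>
     (\<forall>r xs. length xs = rar r \<and> set xs \<subseteq> univ N \<longrightarrow> relI N r xs = relI M r xs)"

definition iso :: "('f \<Rightarrow> nat) \<Rightarrow> ('r \<Rightarrow> nat) \<Rightarrow> ('a \<Rightarrow> 'b) \<Rightarrow> ('a, 'f, 'r) struc \<Rightarrow> ('b, 'f, 'r) struc \<Rightarrow> bool" where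
  "iso ar rar h M N \<longleftrightarrow> bij_betw h (univ M) (univ N) \<and>
     (\<forall>f xs. length xs = ar f \<and> set xs \<subseteq> univ M \<longrightarrow> h (fnI M f xs) = fnI N f (map h xs)) \<and>
     (\<forall>r xs. length xs = rar r \<and> set xs \<subseteq> univ M \<longrightarrow> relI M r xs = relI N r (map h xs))"

fun eval_trm :: "('a, 'f, 'r) struc \<Rightarrow> (nat \<Rightarrow> 'a) \<Rightarrow> ('f, 'a) trm \<Rightarrow> 'a" where
  "eval_trm M e (Var n) = e n"
| "eval_trm M e (Cst a) = a"
| "eval_trm M e (Fn f ts) = fnI M f (map (eval_trm M e) ts)"

fun sat :: "('a, 'f, 'r) struc \<Rightarrow> (nat \<Rightarrow> 'a) \<Rightarrow> ('f, 'r, 'a) fm \<Rightarrow> bool" where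
  "sat M e (Eq s t) = (eval_trm M e s = eval_trm M e t)"
| "sat M e (Rl r ts) = relI M r (map (eval_trm M e) ts)"
| "sat M e (Neg \<phi>) = (\<not> sat M e \<phi>)"
| "sat M e (Conj \<phi> \<psi>) = (sat M e \<phi> \<and> sat M e \<psi>)"
| "sat M e (Ex x \<phi>) = (\<exists>a\<in>univ M. sat M (e(x := a)) \<phi>)"

text \<open>Th(M*): the sentences over the signature expanded by constants for the
elements of the universe of M which are true in M. All such sets live in the
common type of formulas with constants from 'a.\<close>
definition Th :: "('f \<Rightarrow> nat) \<Rightarrow> ('r \<Rightarrow> nat) \<Rightarrow> ('a, 'f, 'r) struc \<Rightarrow> ('f, 'r, 'a) fm set" where
  "Th ar rar M = {\<phi>. wf_fm ar rar \<phi> \<and> fv_fm \<phi> = {} \<and> csts_fm \<phi> \<subseteq> univ M \<and>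
                     (\<forall>e. (\<forall>n. e n \<in> univ M) \<longrightarrow> sat M e \<phi>)}"

definition dl_le :: "('i \<Rightarrow> ('a, 'f, 'r) struc) \<Rightarrow> 'i \<Rightarrow> 'i \<Rightarrow> bool" where
  "dl_le Sf i j \<longleftrightarrow> univ (Sf i) \<subseteq> univ (Sf j)"

text \<open>S is the direct limit of the family Sf indexed by I: each member is a
substructure, the universe of S is the union of their universes, and I is
partially ordered (in particular antisymmetric, i.e. distinct indices give distinct
universes) and directed by inclusion of universes.\<close>
definition direct_limit :: "('f \<Rightarrow> nat) \<Rightarrow> ('r \<Rightarrow> nat) \<Rightarrow> ('a, 'f, 'r) struc \<Rightarrow> 'i set \<Rightarrow> ('i \<Rightarrow> ('a, 'f, 'r) struc) \<Rightarrow> bool" where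
  "direct_limit ar rar S I Sf \<longleftrightarrow>
     (\<forall>i\<in>I. substruc ar rar (Sf i) S) \<and>
     univ S = (\<Union>i\<in>I. univ (Sf i)) \<and>
     inj_on (\<lambda>i. univ (Sf i)) I \<and>
     I \<noteq> {} \<and> (\<forall>i\<in>I. \<forall>j\<in>I. \<exists>k\<in>I. dl_le Sf i k \<and> dl_le Sf j k)"

definition limsupI :: "'i set \<Rightarrow> ('i \<Rightarrow> 'i \<Rightarrow> bool) \<Rightarrow> ('i \<Rightarrow> 'b set) \<Rightarrow> 'b set" where
  "limsupI I le D = {\<theta>. \<forall>i\<in>I. \<exists>j\<in>I. le i j \<and> \<theta> \<in> D j}"

definition liminfI :: "'i set \<Rightarrow> ('i \<Rightarrow> 'i \<Rightarrow> bool) \<Rightarrow> ('i \<Rightarrow> 'b set) \<Rightarrow> 'b set" where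
  "liminfI I le D = {\<theta>. \<exists>i\<in>I. \<forall>j\<in>I. le i j \<longrightarrow> \<theta> \<in> D j}"

definition has_limI :: "'i set \<Rightarrow> ('i \<Rightarrow> 'i \<Rightarrow> bool) \<Rightarrow> ('i \<Rightarrow> 'b set) \<Rightarrow> 'b set \<Rightarrow> bool" where
  "has_limI I le D L \<longleftrightarrow> limsupI I le D = L \<and> liminfI I le D = L"

end

theory Submission
  imports Defs
begin

text \<open>An isomorphism h from S onto S_j which fixes the constants of a sentence
preserves its truth, so such a sentence belongs to Th(S*) exactly when it belongs to
Th(S_j*). By hypothesis, for every sentence there is an index beyond which such
isomorphisms always exist; hence membership of the sentence in Th(S_j*) is
eventually constant and equal to its membership in Th(S*). By directedness
eventual constancy forces lim sup and lim inf to coincide.\<close>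

lemma finite_csts_trm: "finite (csts_trm t)"
  by (induction t) auto

lemma finite_csts_fm: "finite (csts_fm \<phi>)"
  by (induction \<phi>) (auto simp: finite_csts_trm)

lemma has_limI_if_eventually_eq:
  assumes directed: "\<forall>i\<in>I. \<forall>j\<in>I. \<exists>k\<in>I. le i k \<and> le j k"
    and eventually_eq: "\<And>\<theta>. \<exists>i\<in>I. \<forall>j\<in>I. le i j \<longrightarrow> (\<theta> \<in> D j \<longleftrightarrow> \<theta> \<in> L)"
  shows "has_limI I le D L"
proof -
  have "limsupI I le D \<subseteq> L"
  proof
    fix \<theta> assume \<theta>: "\<theta> \<in> limsupI I le D"
    obtain i where "i \<in> I" "\<forall>j\<in>I. le i j \<longrightarrow> (\<theta> \<in> D j \<longleftrightarrow> \<theta> \<in> L)"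
      using eventually_eq by blast
    with \<theta> show "\<theta> \<in> L" unfolding limsupI_def by blast
  qed
  moreover have "L \<subseteq> liminfI I le D"
  proof
    fix \<theta> assume "\<theta> \<in> L"
    moreover obtain i where "i \<in> I" "\<forall>j\<in>I. le i j \<longrightarrow> (\<theta> \<in> D j \<longleftrightarrow> \<theta> \<in> L)"
      using eventually_eq by blast
    ultimately show "\<theta> \<in> liminfI I le D" unfolding liminfI_def by blast
  qed
  moreover have "liminfI I le D \<subseteq> limsupI I le D"
    unfolding liminfI_def limsupI_def using directed by blast
  ultimately show ?thesis unfolding has_limI_def by blast
qed

lemma iso_eval_trm:
  assumes M: "is_struc ar M" and h: "iso ar rar h M N"
    and e: "\<forall>n. e n \<in> univ M"
  shows "wf_trm ar t \<Longrightarrow> csts_trm t \<subseteq> univ M \<Longrightarrow> \<forall>a\<in>csts_trm t. h a = a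
    \<Longrightarrow> eval_trm M e t \<in> univ M \<and> h (eval_trm M e t) = eval_trm N (h \<circ> e) t"
proof (induction t)
  case (Fn f ts)
  then have IH: "\<forall>t\<in>set ts. eval_trm M e t \<in> univ M \<and> h (eval_trm M e t) = eval_trm N (h \<circ> e) t"
    by (auto simp del: comp_apply)
  have len: "length (map (eval_trm M e) ts) = ar f" and sub: "set (map (eval_trm M e) ts) \<subseteq> univ M"
    using Fn.prems IH by auto
  have "fnI M f (map (eval_trm M e) ts) \<in> univ M"
    using M len sub unfolding is_struc_def by blast
  moreover have "h (fnI M f (map (eval_trm M e) ts)) = fnI N f (map h (map (eval_trm M e) ts))"
    using h len sub unfolding iso_def by blast
  moreover have "map h (map (eval_trm M e) ts) = map (eval_trm N (h \<circ> e)) ts"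
    using IH by simp
  ultimately show ?case by (simp only: eval_trm.simps)
qed (use e in auto)

lemma iso_sat:
  assumes M: "is_struc ar M" and h: "iso ar rar h M N"
  shows "wf_fm ar rar \<phi> \<Longrightarrow> csts_fm \<phi> \<subseteq> univ M \<Longrightarrow> \<forall>a\<in>csts_fm \<phi>. h a = a
    \<Longrightarrow> \<forall>n. e n \<in> univ M \<Longrightarrow> sat M e \<phi> = sat N (h \<circ> e) \<phi>"
proof (induction \<phi> arbitrary: e)
  case (Eq s t)
  have "inj_on h (univ M)" using h unfolding iso_def bij_betw_def by blast
  moreover have "eval_trm M e s \<in> univ M \<and> h (eval_trm M e s) = eval_trm N (h \<circ> e) s"
    and "eval_trm M e t \<in> univ M \<and> h (eval_trm M e t) = eval_trm N (h \<circ> e) t"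
    using iso_eval_trm[OF M h] Eq.prems by auto
  ultimately show ?case by (metis sat.simps(1) inj_onD)
next
  case (Rl r ts)
  have IH: "\<forall>t\<in>set ts. eval_trm M e t \<in> univ M \<and> h (eval_trm M e t) = eval_trm N (h \<circ> e) t"
  proof
    fix t assume "t \<in> set ts"
    with Rl.prems show "eval_trm M e t \<in> univ M \<and> h (eval_trm M e t) = eval_trm N (h \<circ> e) t"
      by (intro iso_eval_trm[OF M h]) auto
  qed
  have len: "length (map (eval_trm M e) ts) = rar r" and sub: "set (map (eval_trm M e) ts) \<subseteq> univ M"
    using Rl.prems IH by auto
  have "relI M r (map (eval_trm M e) ts) = relI N r (map h (map (eval_trm M e) ts))"
    using h len sub unfolding iso_def by blast
  moreover have "map h (map (eval_trm M e) ts) = map (eval_trm N (h \<circ> e)) ts"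
    using IH by simp
  ultimately show ?case by (simp only: sat.simps)
next
  case (Ex x \<phi>)
  have "univ N = h ` univ M" using h unfolding iso_def bij_betw_def by blast
  moreover have "sat M (e(x := a)) \<phi> = sat N ((h \<circ> e)(x := h a)) \<phi>" if "a \<in> univ M" for a
  proof -
    have "sat M (e(x := a)) \<phi> = sat N (h \<circ> e(x := a)) \<phi>"
      by (rule Ex.IH) (use Ex.prems that in auto)
    then show ?thesis by (simp only: fun_upd_comp)
  qed
  ultimately show ?case by (auto simp del: comp_apply)
qed auto

lemma iso_Th_iff:
  fixes M N :: "('a, 'f, 'r) struc"
  assumes M: "is_struc ar M" and h: "iso ar rar h M N"
    and csts: "csts_fm \<phi> \<subseteq> univ M" and fixes_csts: "\<forall>a\<in>csts_fm \<phi>. h a = a"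
  shows "\<phi> \<in> Th ar rar M \<longleftrightarrow> \<phi> \<in> Th ar rar N"
proof -
  have bij: "bij_betw h (univ M) (univ N)" using h unfolding iso_def by blast
  have csts_N: "csts_fm \<phi> \<subseteq> univ N"
    using csts fixes_csts bij_betw_apply[OF bij] by force
  have N_assignment: "\<exists>e'. (\<forall>n. e' n \<in> univ M) \<and> e = h \<circ> e'" if "\<forall>n. e n \<in> univ N" for e
    using that bij by (intro exI[of _ "inv_into (univ M) h \<circ> e"])
      (auto simp: bij_betw_def inv_into_into f_inv_into_f)
  have "(\<forall>e. (\<forall>n. e n \<in> univ M) \<longrightarrow> sat M e \<phi>) \<longleftrightarrow> (\<forall>e. (\<forall>n. e n \<in> univ N) \<longrightarrow> sat N e \<phi>)"
    if wf: "wf_fm ar rar \<phi>"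
  proof (intro iffI allI impI)
    fix e :: "nat \<Rightarrow> 'a" assume valid_M: "\<forall>e. (\<forall>n. e n \<in> univ M) \<longrightarrow> sat M e \<phi>" and "\<forall>n. e n \<in> univ N"
    then obtain e' where "\<forall>n. e' n \<in> univ M" "e = h \<circ> e'" using N_assignment by blast
    with valid_M show "sat N e \<phi>" using iso_sat[OF M h wf csts fixes_csts] by blast
  next
    fix e :: "nat \<Rightarrow> 'a" assume valid_N: "\<forall>e. (\<forall>n. e n \<in> univ N) \<longrightarrow> sat N e \<phi>" and e: "\<forall>n. e n \<in> univ M"
    then have "sat N (h \<circ> e) \<phi>" using bij_betw_apply[OF bij] by simp
    with e show "sat M e \<phi>" using iso_sat[OF M h wf csts fixes_csts] by blast
  qed
  with csts csts_N show ?thesis unfolding Th_def by blast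
qed

theorem proposition3p7:
  fixes ar :: "'f \<Rightarrow> nat" and rar :: "'r \<Rightarrow> nat"
    and S :: "('a, 'f, 'r) struc" and I :: "'i set" and Sf :: "'i \<Rightarrow> ('a, 'f, 'r) struc"
  assumes "direct_limit ar rar S I Sf"
    and "\<forall>A. finite A \<and> A \<noteq> {} \<and> A \<subseteq> univ S \<longrightarrow>
           (\<exists>i\<in>I. A \<subseteq> univ (Sf i) \<and>
              (\<forall>j\<in>I. dl_le Sf i j \<longrightarrow>
                 (\<exists>h. iso ar rar h S (Sf j) \<and> (\<forall>a\<in>A. h a = a))))"
  shows "has_limI I (dl_le Sf) (\<lambda>i. Th ar rar (Sf i)) (Th ar rar S)"
proof (rule has_limI_if_eventually_eq)
  have subs: "\<forall>i\<in>I. substruc ar rar (Sf i) S" and univ_S: "univ S = (\<Union>i\<in>I. univ (Sf i))"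
    and "I \<noteq> {}" and directed: "\<forall>i\<in>I. \<forall>j\<in>I. \<exists>k\<in>I. dl_le Sf i k \<and> dl_le Sf j k"
    using assms(1) unfolding direct_limit_def by auto
  then obtain i0 where "i0 \<in> I" by blast
  with subs have S: "is_struc ar S" unfolding substruc_def by blast
  then obtain a0 where a0: "a0 \<in> univ S" unfolding is_struc_def by blast
  show "\<forall>i\<in>I. \<forall>j\<in>I. \<exists>k\<in>I. dl_le Sf i k \<and> dl_le Sf j k" by (fact directed)
  fix \<phi> :: "('f, 'r, 'a) fm"
  show "\<exists>i\<in>I. \<forall>j\<in>I. dl_le Sf i j \<longrightarrow> (\<phi> \<in> Th ar rar (Sf j) \<longleftrightarrow> \<phi> \<in> Th ar rar S)"
  proof (cases "csts_fm \<phi> \<subseteq> univ S")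
    case True
    \<comment> \<open>a0 is added only because the hypothesis is stated for nonempty sets.\<close>
    with a0 assms(2) obtain i where "i \<in> I" and
      "\<forall>j\<in>I. dl_le Sf i j \<longrightarrow> (\<exists>h. iso ar rar h S (Sf j) \<and> (\<forall>a\<in>insert a0 (csts_fm \<phi>). h a = a))"
      using finite_csts_fm[of \<phi>] by (metis finite_insert insert_not_empty insert_subset)
    with True show ?thesis using iso_Th_iff[OF S] by blast
  next
    case False
    then have "\<phi> \<notin> Th ar rar (Sf j)" if "j \<in> I" for j
      using that univ_S unfolding Th_def by blast
    with False show ?thesis using \<open>i0 \<in> I\<close> unfolding Th_def by blast
  qed
qed

end
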